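(* Let $L$ be an $n\times n$ nonsingular M-matrix with integer entries. For every $f\in\mathbb{Z}^n$ with $f\ge 0$, the problem $$\min_{g\sim f,\ g\ge 0} E(g)$$ (minimum over $g\in\mathbb{Z}^n$) has a unique solution.
   Context: A Z-matrix is a square real matrix whose off-diagonal entries are all $\le 0$. A nonsingular M-matrix is a Z-matrix $L$ that is invertible with $L^{-1}$ having all entries nonnegative. Vector inequalities are entrywise. For $f,g\in\mathbb{Z}^n$, $f\sim g$ means $g-f=Lz$ for some $z\in\mathbb{Z}^n$. For $q\in\mathbb{Z}^n$ the energy is $E(q)=\|L^{-1}q\|_2^2$, where $\|v\|_2^2=v\cdot v$. *)

theory Defs
  imports "HOL-Analysis.Analysis"
begin

definition real_mat :: "int^'n^'n \<Rightarrow> real^'n^'n" where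
  "real_mat L = (\<chi> i j. of_int (L $ i $ j))"

definition real_vec :: "int^'n \<Rightarrow> real^'n" where
  "real_vec q = (\<chi> i. of_int (q $ i))"

definition Z_matrix :: "real^'n^'n \<Rightarrow> bool" where
  "Z_matrix A \<longleftrightarrow> (\<forall>i j. i \<noteq> j \<longrightarrow> A $ i $ j \<le> 0)"

definition nonsingular_M_matrix :: "real^'n^'n \<Rightarrow> bool" where
  "nonsingular_M_matrix A \<longleftrightarrow>
     Z_matrix A \<and> invertible A \<and> (\<forall>i j. matrix_inv A $ i $ j \<ge> 0)"

definition vec_nonneg :: "int^'n \<Rightarrow> bool" where
  "vec_nonneg q \<longleftrightarrow> (\<forall>i. q $ i \<ge> 0)"

definition lat_equiv :: "int^'n^'n \<Rightarrow> int^'n \<Rightarrow> int^'n \<Rightarrow> bool" where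
  "lat_equiv L f g \<longleftrightarrow> (\<exists>z::int^'n. g - f = L *v z)"

definition energy :: "int^'n^'n \<Rightarrow> int^'n \<Rightarrow> real" where
  "energy L q = (let v = matrix_inv (real_mat L) *v real_vec q in v \<bullet> v)"

end

theory Submission
  imports Defs
begin

text \<open>Write a feasible \<open>g\<close> as \<open>g = f + L z\<close> and put \<open>x = L\<^sup>-\<^sup>1 f\<close>; then \<open>E(g) = \<parallel>x + z\<parallel>\<^sup>2\<close>,
  and \<open>x + z = L\<^sup>-\<^sup>1 g \<ge> 0\<close> because \<open>L\<^sup>-\<^sup>1 \<ge> 0\<close>. Since \<open>L\<close> is a Z-matrix, the componentwise minimum
  of two feasible shifts \<open>z\<^sub>1, z\<^sub>2\<close> is again feasible, and as \<open>x + z\<^sub>1, x + z\<^sub>2 \<ge> 0\<close> it has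
  strictly smaller energy than one of them unless \<open>z\<^sub>1 = z\<^sub>2\<close>. So two distinct minimizers
  cannot exist. Existence holds because \<open>g = L (L\<^sup>-\<^sup>1 g)\<close> bounds \<open>g\<close> in terms of \<open>E(g)\<close>, so every
  energy sublevel set is a finite set of integer vectors.\<close>

definition energy_minimizer :: "int^'n^'n \<Rightarrow> int^'n \<Rightarrow> int^'n \<Rightarrow> bool" where
  "energy_minimizer L f g \<longleftrightarrow> vec_nonneg g \<and> lat_equiv L f g \<and>
     (\<forall>h. vec_nonneg h \<and> lat_equiv L f h \<longrightarrow> energy L g \<le> energy L h)"

lemma real_vec_add: "real_vec (a + b) = real_vec a + real_vec b"
  by (simp add: real_vec_def vec_eq_iff)

lemma real_vec_matrix_vector_mult: "real_vec (L *v z) = real_mat L *v real_vec z"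
  by (simp add: real_vec_def real_mat_def vec_eq_iff matrix_vector_mult_def)

lemma lat_equiv_iff: "lat_equiv L f g \<longleftrightarrow> (\<exists>z. g = f + L *v z)"
  unfolding lat_equiv_def by (metis add.commute diff_add_cancel add_diff_cancel_left')

lemma matrix_inv_right_left:
  fixes A :: "'a::semiring_1^'n^'n"
  assumes "invertible A"
  shows matrix_inv_right: "A ** matrix_inv A = mat 1"
    and matrix_inv_left: "matrix_inv A ** A = mat 1"
proof -
  have "\<exists>A'. A ** A' = mat 1 \<and> A' ** A = mat 1"
    using assms unfolding invertible_def by blast
  from someI_ex[OF this] show "A ** matrix_inv A = mat 1" "matrix_inv A ** A = mat 1"
    unfolding matrix_inv_def by auto
qed

lemma finite_int_vectors_bounded: "finite {g::int^'n. \<forall>i. \<bar>g $ i\<bar> \<le> M}"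
proof -
  have "{g::int^'n. \<forall>i. \<bar>g $ i\<bar> \<le> M} \<subseteq> vec_lambda ` PiE UNIV (\<lambda>_. {-M..M})"
  proof
    fix g :: "int^'n"
    assume "g \<in> {g. \<forall>i. \<bar>g $ i\<bar> \<le> M}"
    then show "g \<in> vec_lambda ` PiE UNIV (\<lambda>_. {-M..M})"
      by (intro image_eqI[where x = "vec_nth g"])
        (auto simp: PiE_iff abs_le_iff, metis minus_le_iff)
  qed
  then show ?thesis
    by (rule finite_subset) (intro finite_imageI finite_PiE; simp)
qed

lemma ex_minimizer_if_finite_sublevel:
  fixes E :: "'a \<Rightarrow> 'b::linorder"
  assumes "finite {x \<in> S. E x \<le> E a}" and "a \<in> S"
  shows "\<exists>x\<in>S. \<forall>y\<in>S. E x \<le> E y"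
proof -
  let ?T = "{x \<in> S. E x \<le> E a}"
  have ne: "?T \<noteq> {}" using assms(2) by blast
  define m where "m = arg_min_on E ?T"
  have m: "m \<in> ?T"
    unfolding m_def using assms(1) ne by (rule arg_min_if_finite(1))
  have least: "E m \<le> E y" if "y \<in> ?T" for y
    unfolding m_def using assms(1) ne that by (rule arg_min_least)
  have "E m \<le> E y" if "y \<in> S" for y
    using least[of y] m that by (cases "E y \<le> E a") auto
  with m show ?thesis by blast
qed

lemma Z_matrix_mult_antimono_at:
  fixes L :: "'a::linordered_idom^'n^'n"
  assumes "\<And>i j. i \<noteq> j \<Longrightarrow> L $ i $ j \<le> 0"
    and "\<And>j. z $ j \<le> w $ j" and "z $ i = w $ i"
  shows "(L *v w) $ i \<le> (L *v z) $ i"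
proof -
  have "0 \<le> L $ i $ j * (z $ j - w $ j)" for j
    using assms by (cases "i = j") (auto intro: mult_nonpos_nonpos)
  then have "0 \<le> (\<Sum>j\<in>UNIV. L $ i $ j * (z $ j - w $ j))"
    by (rule sum_nonneg)
  then show ?thesis
    by (simp add: matrix_vector_mult_def right_diff_distrib sum_subtractf)
qed

lemma vec_nonneg_shift_min:
  fixes L :: "int^'n^'n"
  assumes "\<And>i j. i \<noteq> j \<Longrightarrow> L $ i $ j \<le> 0"
    and "vec_nonneg (f + L *v z1)" and "vec_nonneg (f + L *v z2)"
  shows "vec_nonneg (f + L *v (\<chi> j. min (z1 $ j) (z2 $ j)))"
  unfolding vec_nonneg_def
proof
  fix i
  let ?z = "\<chi> j. min (z1 $ j) (z2 $ j)"
  have "(L *v z1) $ i \<le> (L *v ?z) $ i \<or> (L *v z2) $ i \<le> (L *v ?z) $ i"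
  proof (cases "z1 $ i \<le> z2 $ i")
    case True
    then show ?thesis using Z_matrix_mult_antimono_at[OF assms(1), of ?z z1 i] by auto
  next
    case False
    then show ?thesis using Z_matrix_mult_antimono_at[OF assms(1), of ?z z2 i] by auto
  qed
  moreover have "0 \<le> f $ i + (L *v z1) $ i" "0 \<le> f $ i + (L *v z2) $ i"
    using assms(2,3) unfolding vec_nonneg_def by auto
  ultimately show "0 \<le> (f + L *v ?z) $ i"
    by auto
qed

lemma inner_inf_lt:
  fixes a b :: "real^'n"
  assumes "0 \<le> a" and "0 \<le> b" and "a \<noteq> b"
  shows "inf a b \<bullet> inf a b < a \<bullet> a \<or> inf a b \<bullet> inf a b < b \<bullet> b"
proof -
  have le: "(inf a b $ j)\<^sup>2 \<le> (a $ j)\<^sup>2" "(inf a b $ j)\<^sup>2 \<le> (b $ j)\<^sup>2" for j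
    using assms(1,2) by (auto simp: inf_vec_def less_eq_vec_def intro!: power_mono)
  obtain i where "a $ i \<noteq> b $ i"
    using assms(3) by (auto simp: vec_eq_iff)
  then have "(inf a b $ i)\<^sup>2 < (a $ i)\<^sup>2 \<or> (inf a b $ i)\<^sup>2 < (b $ i)\<^sup>2"
    using assms(1,2)
    by (auto simp: inf_vec_def less_eq_vec_def inf_min min_def intro!: power_strict_mono)
  then show ?thesis
    unfolding inner_vec_def using le
    by (auto simp: power2_eq_square[symmetric] intro!: sum_strict_mono_ex1)
qed

context
  fixes L :: "int^'n^'n" and f :: "int^'n"
  assumes inv: "invertible (real_mat L)"
begin

lemma matrix_inv_mult_shift:
  "matrix_inv (real_mat L) *v real_vec (f + L *v z) =
     matrix_inv (real_mat L) *v real_vec f + real_vec z"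
  by (simp add: real_vec_add real_vec_matrix_vector_mult matrix_vector_right_distrib
      matrix_vector_mul_assoc matrix_inv_left[OF inv])

lemma energy_shift:
  "energy L (f + L *v z) =
     (matrix_inv (real_mat L) *v real_vec f + real_vec z) \<bullet>
     (matrix_inv (real_mat L) *v real_vec f + real_vec z)"
  by (simp add: energy_def Let_def matrix_inv_mult_shift)

lemma finite_energy_sublevel: "finite {g. energy L g \<le> c}"
proof -
  obtain K where K: "\<And>u. norm (real_mat L *v u) \<le> norm u * K" and "K \<ge> 0"
    using bounded_linear.nonneg_bounded[OF matrix_vector_mul_bounded_linear] by blast
  define M where "M = sqrt c * K"
  have "\<bar>g $ i\<bar> \<le> \<lceil>M\<rceil>" if "energy L g \<le> c" for g i
  proof -
    define u where "u = matrix_inv (real_mat L) *v real_vec g"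
    have "norm u ^ 2 \<le> c"
      using that by (simp add: energy_def u_def dot_square_norm)
    then have "norm u * K \<le> M"
      unfolding M_def using \<open>K \<ge> 0\<close> by (intro mult_right_mono) (auto intro: real_le_rsqrt)
    have "\<bar>real_of_int (g $ i)\<bar> = \<bar>real_vec g $ i\<bar>"
      by (simp add: real_vec_def)
    also have "\<dots> \<le> norm (real_vec g)"
      by (rule component_le_norm_cart)
    also have "real_vec g = real_mat L *v u"
      by (simp add: u_def matrix_vector_mul_assoc matrix_inv_right[OF inv])
    also have "norm \<dots> \<le> M"
      using K[of u] \<open>norm u * K \<le> M\<close> by linarith
    finally show ?thesis by linarith
  qed
  then have "{g. energy L g \<le> c} \<subseteq> {g. \<forall>i. \<bar>g $ i\<bar> \<le> \<lceil>M\<rceil>}"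
    by blast
  then show ?thesis
    by (rule finite_subset) (rule finite_int_vectors_bounded)
qed

end

lemma M_matrix_inv_mult_nonneg:
  assumes "nonsingular_M_matrix (real_mat L)" and "vec_nonneg g"
  shows "0 \<le> matrix_inv (real_mat L) *v real_vec g"
  using assms unfolding nonsingular_M_matrix_def vec_nonneg_def
  by (auto simp: less_eq_vec_def matrix_vector_mult_def real_vec_def intro!: sum_nonneg)

lemma energy_minimizer_exists:
  assumes "invertible (real_mat L)" and "vec_nonneg f"
  shows "\<exists>g. energy_minimizer L f g"
proof -
  let ?S = "{g. vec_nonneg g \<and> lat_equiv L f g}"
  have "{g \<in> ?S. energy L g \<le> energy L f} \<subseteq> {g. energy L g \<le> energy L f}"
    by blast
  then have "finite {g \<in> ?S. energy L g \<le> energy L f}"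
    by (rule finite_subset) (rule finite_energy_sublevel[OF assms(1)])
  moreover have "f \<in> ?S"
    using assms(2) unfolding lat_equiv_iff by (auto intro!: exI[of _ 0])
  ultimately have "\<exists>g\<in>?S. \<forall>h\<in>?S. energy L g \<le> energy L h"
    by (rule ex_minimizer_if_finite_sublevel)
  then show ?thesis
    unfolding energy_minimizer_def by auto
qed

lemma energy_minimizer_unique:
  assumes M: "nonsingular_M_matrix (real_mat L)"
    and g1: "energy_minimizer L f g1" and g2: "energy_minimizer L f g2"
  shows "g1 = g2"
proof (rule ccontr)
  assume "g1 \<noteq> g2"
  have Z: "\<And>i j. i \<noteq> j \<Longrightarrow> L $ i $ j \<le> 0"
    using M unfolding nonsingular_M_matrix_def Z_matrix_def real_mat_def by auto
  have inv: "invertible (real_mat L)"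
    using M unfolding nonsingular_M_matrix_def by blast
  have "vec_nonneg g1" "vec_nonneg g2"
    using g1 g2 unfolding energy_minimizer_def by auto
  obtain z1 z2 where z1: "g1 = f + L *v z1" and z2: "g2 = f + L *v z2"
    using g1 g2 unfolding energy_minimizer_def lat_equiv_iff by blast
  define x where "x = matrix_inv (real_mat L) *v real_vec f"
  define u1 u2 where "u1 = x + real_vec z1" and "u2 = x + real_vec z2"
  have "0 \<le> u1" "0 \<le> u2"
    using M_matrix_inv_mult_nonneg[OF M \<open>vec_nonneg g1\<close>]
      M_matrix_inv_mult_nonneg[OF M \<open>vec_nonneg g2\<close>]
    unfolding z1 z2 u1_def u2_def x_def matrix_inv_mult_shift[OF inv] by simp_all
  moreover have "u1 \<noteq> u2"
    using \<open>g1 \<noteq> g2\<close> unfolding u1_def u2_def z1 z2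
    by (cases "z1 = z2") (auto simp: real_vec_def vec_eq_iff)
  ultimately have lt:
    "inf u1 u2 \<bullet> inf u1 u2 < u1 \<bullet> u1 \<or> inf u1 u2 \<bullet> inf u1 u2 < u2 \<bullet> u2"
    by (rule inner_inf_lt)
  define zm where "zm = (\<chi> j. min (z1 $ j) (z2 $ j))"
  have "vec_nonneg (f + L *v zm)"
    using Z \<open>vec_nonneg g1\<close> \<open>vec_nonneg g2\<close> unfolding zm_def z1 z2
    by (rule vec_nonneg_shift_min)
  then have "energy L g1 \<le> energy L (f + L *v zm)"
    and "energy L g2 \<le> energy L (f + L *v zm)"
    using g1 g2 unfolding energy_minimizer_def lat_equiv_iff by blast+
  moreover have min_shift: "x + real_vec zm = inf u1 u2"
    by (auto simp: zm_def u1_def u2_def vec_eq_iff inf_vec_def inf_min real_vec_def min_def)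
  ultimately show False
    using lt
    unfolding z1 z2 energy_shift[OF inv] x_def[symmetric] u1_def[symmetric] u2_def[symmetric]
    by (simp only: min_shift) linarith
qed

theorem mainTheorem3:
  fixes L :: "int^'n^'n" and f :: "int^'n"
  assumes "nonsingular_M_matrix (real_mat L)"
    and "vec_nonneg f"
  shows "\<exists>!g. vec_nonneg g \<and> lat_equiv L f g \<and>
           (\<forall>h. vec_nonneg h \<and> lat_equiv L f h \<longrightarrow> energy L g \<le> energy L h)"
proof -
  have "invertible (real_mat L)"
    using assms(1) unfolding nonsingular_M_matrix_def by blast
  then have "\<exists>g. energy_minimizer L f g"
    using assms(2) by (rule energy_minimizer_exists)
  then have "\<exists>!g. energy_minimizer L f g"
    using energy_minimizer_unique[OF assms(1)] by (rule ex_ex1I)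
  then show ?thesis
    unfolding energy_minimizer_def .
qed

end
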